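(* Consider the continuous stirred tank reactor model \[ \dot C_A = \theta_1 - \theta_2 C_A - k_0 e^{-\theta_5/T} C_A,\qquad \dot T = \theta_2 (T_{in}-T) - \theta_3 k_0 e^{-\theta_5/T} C_A + \theta_4 u, \] with states $C_A(t)>0$, $T(t)>0$, measured signals $C_A, T, T_{in}, u$, known constant $k_0>0$ and unknown constant parameters $\theta=\mathrm{col}(\theta_1,\dots,\theta_5)$. Fix $\lambda>0$, let $p=d/dt$, and define the filtered signals \[ y := \tfrac{\lambda p}{p+\lambda}(-T),\qquad \varphi := \mathrm{col}\Big(1,\ \tfrac{\lambda}{p+\lambda}(T-T_{in}),\ \tfrac{\lambda p}{p+\lambda}(-C_A),\ \tfrac{\lambda}{p+\lambda}(-u),\ \tfrac{\lambda}{p+\lambda}(-C_A)\Big), \] so that, neglecting exponentially decaying terms due to filter initial conditions, $y=\eta^\top\varphi$ with $\eta:=\mathrm{col}(\theta_1\theta_3,\theta_2,\theta_3,\theta_4,\theta_2\theta_3)$. Assume $\varphi$ is interval exciting, i.e. there exist $c_c>0$, $t_c>0$ with $\int_0^{t_c}\varphi(s)\varphi^\top(s)\,ds \ge c_c I_5$. Consider the estimator \[ \begin{aligned} \dot{\hat\mu} &= \alpha F\varphi(y-\varphi^\top\hat\mu),\quad \hat\mu(0)=\mu^0\in\mathbb{R}^5,\\ \dot F &= -\alpha F\varphi\varphi^\top F + \beta F,\quad F(0)=\tfrac{1}{f_0}I_5,\\ \dot{\hat\eta}_{1,4} &= \gamma_a\Delta(\mathcal{Y}_{1,4}-\Delta\hat\eta_{1,4}),\quad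 \hat\eta_{1,4}(0)=\eta^0_{1,4}\in\mathbb{R}^4_+,\\ \dot z &= -\beta z,\quad z(0)=1, \end{aligned} \] where $\beta:=\beta_0\big(1-\|F\|/M\big)$, $\Delta:=\det\{I_5-zf_0F\}$, $\mathcal{Y}:=\mathrm{adj}\{I_5-zf_0F\}[\hat\mu - zf_0F\mu^0]$, and the tuning gains satisfy $\alpha>0$, $f_0>0$, $\beta_0>0$, $M\ge 1/f_0$, $\gamma_a>0$. Define the parameter estimates $\hat\theta_{2,4}:=\hat\eta_{2,4}$ and $\hat\theta_1:=\hat\eta_1/\hat\eta_3$. Then, for all $f_0>0$ and all such initial conditions of the estimates, $\lim_{t\to\infty}|\tilde\theta_{1,4}(t)|=0$ exponentially, with all signals bounded, where $\tilde\theta_{1,4}:=\hat\theta_{1,4}-\theta_{1,4}$.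
   Context: For a vector $a=\mathrm{col}(a_1,\dots,a_n)$, $a_{i,j}:=\mathrm{col}(a_i,\dots,a_j)$. For a transfer function $\mathcal H(p)$, $\mathcal H(p)(u)$ denotes the output of the corresponding LTI filter driven by the signal $u$. $\mathrm{adj}$ denotes the adjugate matrix and $\|\cdot\|$ the Euclidean (induced) matrix norm. The parameters are $\theta=\mathrm{col}\big(\tfrac{q}{V}C_{in},\tfrac{q}{V},\tfrac{\Delta H}{\rho C_p},\tfrac{hA}{\rho C_p V},\tfrac{E}{R}\big)$ of physical constants, and $u:=T_w-T$ with $T_w$ the heat exchanger temperature. *)

theory Defs
  imports "HOL-Analysis.Analysis"
begin

text \<open>Adjugate (classical adjoint) of a square matrix: the transpose of the cofactor
  matrix, where the (j,i) cofactor is the determinant of A with row j replaced by the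
  i-th standard basis row (Laplace expansion).  Hence adj A * A = A * adj A = det A * I.\<close>
definition adjugate :: "real^'n^'n \<Rightarrow> real^'n^'n" where
  "adjugate A = (\<chi> i j. det (\<chi> k l. if k = j then (if l = i then 1 else 0) else A $ k $ l))"

definition mat_norm :: "real^'n^'m \<Rightarrow> real" where
  "mat_norm A = onorm (\<lambda>x. A *v x)"

end

theory Submission
  imports Defs
begin

text \<open>The information matrix \<open>P = z (f0 I + \<alpha> \<integral> \<phi> \<phi>\<^sup>T / z)\<close> satisfies \<open>F P = I\<close>. Whenever
  \<open>mat_norm F\<close> exceeds \<open>M\<close> the forgetting factor is negative and \<open>P\<close> can only grow, which keeps
  \<open>mat_norm F \<le> M\<close> and \<open>0 < z \<le> 1\<close>. The error of \<open>\<mu>h\<close> is \<open>z f0 F (\<mu>0 - \<eta>)\<close>, so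
  \<open>(I - z f0 F) \<eta> = \<mu>h - z f0 F \<mu>0\<close>, and multiplying by the adjugate gives the scalar regressions
  \<open>Yc = \<Delta> \<eta>\<close>. Interval excitation bounds the inverse of \<open>I - z f0 F = z \<alpha> F J\<close> after \<open>t_c\<close>,
  so \<open>|\<Delta>| \<ge> \<delta> > 0\<close> there. Hence \<open>\<eta>h - \<eta>\<close> decays like \<open>exp (- \<gamma>a \<integral> \<Delta>\<^sup>2) \<le> exp (- \<gamma>a \<delta>\<^sup>2 (t - t_c))\<close>,
  and since \<open>\<eta>h 3\<close> stays a convex combination of \<open>\<eta>0 3\<close> and \<open>\<theta>3\<close>, hence bounded away from zero,
  the quotient \<open>\<eta>h 1 / \<eta>h 3\<close> converges to \<open>\<theta>1\<close> at the same rate.\<close>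

lemma exhaust_5:
  fixes x :: 5
  shows "x = 1 \<or> x = 2 \<or> x = 3 \<or> x = 4 \<or> x = 5"
proof (induct x)
  case (of_int z)
  then have "z = 0 \<or> z = 1 \<or> z = 2 \<or> z = 3 \<or> z = 4" by fastforce
  then show ?case by auto
qed

lemma vector_4 [simp]:
  "(vector [a, b, c, d] :: ('a::zero)^4) $ 1 = a"
  "(vector [a, b, c, d] :: ('a::zero)^4) $ 2 = b"
  "(vector [a, b, c, d] :: ('a::zero)^4) $ 3 = c"
  "(vector [a, b, c, d] :: ('a::zero)^4) $ 4 = d"
  unfolding vector_def by simp_all

lemma vector_5 [simp]:
  "(vector [a, b, c, d, e] :: ('a::zero)^5) $ 1 = a"
  "(vector [a, b, c, d, e] :: ('a::zero)^5) $ 2 = b"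
  "(vector [a, b, c, d, e] :: ('a::zero)^5) $ 3 = c"
  "(vector [a, b, c, d, e] :: ('a::zero)^5) $ 4 = d"
  "(vector [a, b, c, d, e] :: ('a::zero)^5) $ 5 = e"
  unfolding vector_def by simp_all

lemma continuous_on_vector_5:
  fixes a b c d e :: "'a::topological_space \<Rightarrow> real"
  assumes "continuous_on S a" "continuous_on S b" "continuous_on S c" "continuous_on S d" "continuous_on S e"
  shows "continuous_on S (\<lambda>t. vector [a t, b t, c t, d t, e t] :: real^5)"
proof -
  have "continuous_on S (\<lambda>t. vector [a t, b t, c t, d t, e t] $ i)" for i :: 5
    using exhaust_5[of i] assms by auto
  then show ?thesis
    using continuous_on_vec_lambda[of S "\<lambda>i t. vector [a t, b t, c t, d t, e t] $ i"] by simp blast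
qed

section \<open>Matrices\<close>

lemma matrix_add_rdistrib: "(B + C) ** A = B ** A + C ** A"
  by (vector matrix_matrix_mult_def sum.distrib[symmetric] field_simps)

lemma bounded_bilinear_matrix_matrix_mult:
  "bounded_bilinear ((**) :: real^'n^'m \<Rightarrow> real^'p^'n \<Rightarrow> real^'p^'m)"
proof -
  have "bilinear ((**) :: real^'n^'m \<Rightarrow> real^'p^'n \<Rightarrow> real^'p^'m)"
    unfolding bilinear_def
    by (auto intro!: linearI simp: matrix_add_ldistrib matrix_add_rdistrib
        matrix_scalar_ac scalar_matrix_assoc)
  then show ?thesis by (rule bilinear_conv_bounded_bilinear[THEN iffD1])
qed

lemma bounded_bilinear_matrix_vector_mult:
  "bounded_bilinear ((*v) :: real^'n^'m \<Rightarrow> real^'n \<Rightarrow> real^'m)"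
proof -
  have "bilinear ((*v) :: real^'n^'m \<Rightarrow> real^'n \<Rightarrow> real^'m)"
    unfolding bilinear_def
    by (auto intro!: linearI simp: matrix_vector_right_distrib matrix_vector_mult_add_rdistrib
        matrix_vector_mult_scaleR scaleR_matrix_vector_assoc)
  then show ?thesis by (rule bilinear_conv_bounded_bilinear[THEN iffD1])
qed

lemmas matrix_diff_ldistrib = bounded_bilinear.diff_right[OF bounded_bilinear_matrix_matrix_mult]
lemmas matrix_diff_rdistrib = bounded_bilinear.diff_left[OF bounded_bilinear_matrix_matrix_mult]
lemmas matrix_minus_left = bounded_bilinear.minus_left[OF bounded_bilinear_matrix_matrix_mult]
lemmas matrix_minus_right = bounded_bilinear.minus_right[OF bounded_bilinear_matrix_matrix_mult]
lemmas matrix_vector_mult_minus_left =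
  bounded_bilinear.minus_left[OF bounded_bilinear_matrix_vector_mult]

lemma transpose_add: "transpose (A + B) = transpose A + transpose B"
  by (simp add: transpose_def vec_eq_iff)

lemma bounded_linear_transpose: "bounded_linear (transpose :: real^'n^'m \<Rightarrow> real^'m^'n)"
  by (simp add: linear_conv_bounded_linear[symmetric] linearI transpose_add transpose_scalar)

lemma bounded_linear_quadratic_form: "bounded_linear (\<lambda>A :: real^'n^'n. v \<bullet> (A *v v))"
  by (rule bounded_linear_compose[OF bounded_linear_inner_right
        bounded_bilinear.bounded_linear_left[OF bounded_bilinear_matrix_vector_mult]])

lemma continuous_on_det:
  fixes A :: "'a::topological_space \<Rightarrow> real^'n^'n"
  assumes "continuous_on S A"
  shows "continuous_on S (\<lambda>t. det (A t))"
  unfolding det_def by (intro continuous_intros assms)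

lemma det_unit_row_eq_unit_column:
  fixes A :: "real^'n^'n"
  shows "det (\<chi> k l. if k = j then (if l = i then 1 else 0) else A$k$l) =
         det (\<chi> k l. if l = i then (if k = j then 1 else 0) else A$k$l)"
  unfolding det_def
proof (rule sum.cong[OF refl])
  fix p assume "p \<in> {p. p permutes (UNIV::'n set)}"
  then have p: "p permutes UNIV" by simp
  show "of_int (sign p) * (\<Prod>k\<in>UNIV. (\<chi> k l. if k = j then (if l = i then 1 else 0) else A$k$l) $ k $ p k) =
        of_int (sign p) * (\<Prod>k\<in>UNIV. (\<chi> k l. if l = i then (if k = j then 1 else 0) else A$k$l) $ k $ p k)"
  proof (cases "p j = i")
    case True
    then have "k \<noteq> j \<Longrightarrow> p k \<noteq> i" for k using p by (metis permutes_inj injD)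
    with True show ?thesis by (auto intro!: arg_cong[where f = "\<lambda>x. _ * x"] prod.cong)
  next
    case False
    obtain k where k: "p k = i" using p by (metis permutes_surj surjD)
    with False have "k \<noteq> j" by auto
    have "(\<Prod>k\<in>UNIV. (\<chi> k l. if k = j then (if l = i then 1 else 0) else A$k$l) $ k $ p k) = 0"
      by (rule prod_zero) (use False in auto)
    moreover have "(\<Prod>k\<in>UNIV. (\<chi> k l. if l = i then (if k = j then 1 else 0) else A$k$l) $ k $ p k) = 0"
      by (rule prod_zero) (use k \<open>k \<noteq> j\<close> in \<open>auto intro!: bexI[of _ k]\<close>)
    ultimately show ?thesis by (metis (no_types, lifting))
  qed
qed

lemma det_column_expansion:
  fixes A :: "real^'n^'n"
  shows "det (\<chi> k l. if l = i then y$k else A$k$l) =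
         (\<Sum>j\<in>UNIV. y$j * det (\<chi> k l. if l = i then (if k = j then 1 else 0) else A$k$l))"
proof -
  have "det (\<chi> k l. if l = i then y$k else A$k$l) =
        det (\<chi> l. if l = i then (\<Sum>j\<in>UNIV. y$j *s axis j 1) else row l (transpose A))"
    by (subst det_transpose[symmetric], rule arg_cong[where f = det])
       (auto simp: vec_eq_iff transpose_def row_def axis_def if_distrib cong: if_cong)
  also have "\<dots> = (\<Sum>j\<in>UNIV. y$j * det (\<chi> l. if l = i then axis j 1 else row l (transpose A)))"
    by (simp add: det_linear_row_sum det_row_mul)
  also have "\<dots> = (\<Sum>j\<in>UNIV. y$j * det (\<chi> k l. if l = i then (if k = j then 1 else 0) else A$k$l))"
    by (rule sum.cong[OF refl], subst det_transpose[symmetric])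
       (auto intro!: arg_cong[where f = "\<lambda>d. _ * d"] arg_cong[where f = det]
         simp: vec_eq_iff transpose_def row_def axis_def)
  finally show ?thesis .
qed

lemma adjugate_mult_vector_nth:
  fixes A :: "real^'n^'n"
  shows "(adjugate A *v y) $ i = det (\<chi> k l. if l = i then y$k else A$k$l)"
  unfolding det_column_expansion adjugate_def
  by (simp add: matrix_vector_mult_def det_unit_row_eq_unit_column mult.commute)

lemma adjugate_mult_vector:
  fixes A :: "real^'n^'n"
  shows "adjugate A *v (A *v x) = det A *\<^sub>R x"
  using cramer_lemma[where A = A and x = x] by (simp add: vec_eq_iff adjugate_mult_vector_nth mult.commute)

lemma abs_det_le_entry_bound:
  fixes B :: "real^'n^'n"
  assumes "\<And>i j. \<bar>B$i$j\<bar> \<le> C"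
  shows "\<bar>det B\<bar> \<le> fact CARD('n) * C ^ CARD('n)"
proof -
  have "\<bar>det B\<bar> \<le> (\<Sum>p\<in>{p. p permutes (UNIV::'n set)}. \<bar>of_int (sign p) * (\<Prod>i\<in>UNIV. B$i$p i)\<bar>)"
    unfolding det_def by (rule sum_abs)
  also have "\<dots> \<le> (\<Sum>p\<in>{p. p permutes (UNIV::'n set)}. C ^ CARD('n))"
  proof (rule sum_mono)
    fix p
    have "\<bar>of_int (sign p) * (\<Prod>i\<in>UNIV. B$i$p i)\<bar> = (\<Prod>i\<in>UNIV. \<bar>B$i$p i\<bar>)"
      by (simp add: abs_mult sign_def abs_prod)
    also have "\<dots> \<le> (\<Prod>i\<in>(UNIV::'n set). C)"
      by (rule prod_mono) (use assms in auto)
    finally show "\<bar>of_int (sign p) * (\<Prod>i\<in>UNIV. B$i$p i)\<bar> \<le> C ^ CARD('n)" by simp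
  qed
  also have "\<dots> = fact CARD('n) * C ^ CARD('n)"
    by (simp add: card_permutations)
  finally show ?thesis .
qed

lemma abs_det_ge_of_inverse_bound:
  fixes A :: "real^'n^'n"
  assumes inv_bound: "\<And>w. norm w \<le> C * norm (A *v w)"
  shows "1 / (fact CARD('n) * C ^ CARD('n)) \<le> \<bar>det A\<bar>"
proof -
  have "inj ((*v) A)"
    by (rule injI) (metis inv_bound matrix_vector_mult_diff_distrib mult_zero_right
        norm_le_zero_iff norm_zero eq_iff_diff_eq_0)
  then have "det A \<noteq> 0"
    using det_nz_iff_inj[OF matrix_vector_mul_linear[of A]] by simp
  then obtain B where AB: "A ** B = mat 1"
    using invertible_det_nz invertible_def by blast
  have entry_bound: "\<bar>B$i$j\<bar> \<le> C" for i j
  proof -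
    have "\<bar>B$i$j\<bar> \<le> norm (B *v axis j 1)"
      using component_le_norm_cart[of "B *v axis j 1" i]
      by (simp add: matrix_vector_mult_def axis_def if_distrib cong: if_cong)
    also have "\<dots> \<le> C * norm (A *v (B *v axis j 1))" by (rule inv_bound)
    also have "\<dots> = C" by (simp add: matrix_vector_mul_assoc AB)
    finally show ?thesis .
  qed
  have "0 < C"
    using inv_bound[of "axis undefined 1"] by (smt (verit) norm_axis_1 norm_ge_zero mult_nonpos_nonneg)
  have "1 = \<bar>det A\<bar> * \<bar>det B\<bar>"
    using det_mul[of A B] AB by (simp flip: abs_mult)
  also have "\<dots> \<le> \<bar>det A\<bar> * (fact CARD('n) * C ^ CARD('n))"
    by (intro mult_left_mono abs_det_le_entry_bound entry_bound) simp
  finally show ?thesis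
    using \<open>0 < C\<close> by (simp add: divide_le_eq mult.commute)
qed

lemma norm_matrix_vector_le_mat_norm: "norm (A *v x) \<le> mat_norm A * norm x"
  unfolding mat_norm_def by (rule onorm[OF matrix_vector_mul_bounded_linear])

lemma mat_norm_nonneg: "0 \<le> mat_norm A"
  unfolding mat_norm_def by (rule onorm_pos_le[OF matrix_vector_mul_bounded_linear])

lemma norm_le_mat_norm:
  fixes A :: "real^'n^'m"
  shows "norm A \<le> real CARD('m) * real CARD('n) * mat_norm A"
proof -
  have "norm A \<le> (\<Sum>i\<in>UNIV. norm (A$i))"
    unfolding norm_vec_def by (rule L2_set_le_sum) simp
  also have "\<dots> \<le> (\<Sum>i\<in>UNIV. \<Sum>j\<in>UNIV. \<bar>A$i$j\<bar>)"
    by (rule sum_mono) (rule norm_le_l1_cart)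
  also have "\<dots> \<le> (\<Sum>i\<in>(UNIV::'m set). \<Sum>j\<in>(UNIV::'n set). mat_norm A)"
    unfolding mat_norm_def by (intro sum_mono matrix_component_le_onorm)
  finally show ?thesis by simp
qed

lemma mat_norm_le_norm:
  fixes A :: "real^'n^'m"
  shows "mat_norm A \<le> real CARD('m) * real CARD('n) * norm A"
  unfolding mat_norm_def
proof (rule onorm_le_matrix_component)
  show "\<bar>A$i$j\<bar> \<le> norm A" for i j
    using component_le_norm_cart[of "A$i" j] Finite_Cartesian_Product.norm_nth_le[of A i] by linarith
qed

lemma mat_norm_triangle: "mat_norm (A + B) \<le> mat_norm A + mat_norm B"
  unfolding mat_norm_def matrix_vector_mult_add_rdistrib
  by (rule onorm_triangle) auto

lemma continuous_on_mat_norm: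
  fixes F :: "'a::topological_space \<Rightarrow> real^'n^'m"
  assumes "continuous_on S F"
  shows "continuous_on S (\<lambda>t. mat_norm (F t))"
proof -
  have "\<bar>mat_norm A - mat_norm B\<bar> \<le> real CARD('m) * real CARD('n) * norm (A - B)" for A B :: "real^'n^'m"
    using mat_norm_triangle[of B "A - B"] mat_norm_triangle[of A "B - A"]
      mat_norm_le_norm[of "A - B"] mat_norm_le_norm[of "B - A"]
    by (simp add: norm_minus_commute)
  then have "(real CARD('m) * real CARD('n))-lipschitz_on UNIV (mat_norm :: real^'n^'m \<Rightarrow> real)"
    by (intro lipschitz_onI) (auto simp: dist_norm)
  then show ?thesis
    using continuous_on_compose2[OF lipschitz_on_continuous_on assms] by blast
qed

lemma symmetric_matrix_inner_commute:
  fixes F :: "real^'n^'n"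
  assumes "transpose F = F"
  shows "a \<bullet> (F *v c) = c \<bullet> (F *v a)"
  by (metis assms dot_lmul_matrix inner_commute vector_transpose_matrix)

lemma psd_matrix_cauchy_schwarz:
  fixes F :: "real^'n^'n"
  assumes sym: "transpose F = F" and psd: "\<And>x. 0 \<le> x \<bullet> (F *v x)"
  shows "(a \<bullet> (F *v c))\<^sup>2 \<le> (a \<bullet> (F *v a)) * (c \<bullet> (F *v c))"
proof -
  define p q r where "p = a \<bullet> (F *v a)" and "q = a \<bullet> (F *v c)" and "r = c \<bullet> (F *v c)"
  have discriminant: "0 \<le> p - 2 * s * q + s\<^sup>2 * r" for s
  proof -
    have "0 \<le> (a - s *\<^sub>R c) \<bullet> (F *v (a - s *\<^sub>R c))" by (rule psd)
    also have "\<dots> = p - s * q - s * (c \<bullet> (F *v a)) + s\<^sup>2 * r"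
      unfolding p_def q_def r_def
      by (simp add: power2_eq_square algebra_simps)
    finally show ?thesis
      using symmetric_matrix_inner_commute[OF sym, of c a] by (simp add: q_def)
  qed
  show ?thesis
  proof (cases "r = 0")
    case True
    have "q = 0"
    proof (rule ccontr)
      assume "q \<noteq> 0"
      then have "p - 2 * ((p + 1) / (2 * q)) * q = -1" by (simp add: field_simps)
      then show False using discriminant[of "(p + 1) / (2 * q)"] True by simp
    qed
    then show ?thesis using True by (simp add: q_def r_def)
  next
    case False
    then have "r > 0" using psd[of c] by (simp add: r_def)
    have "0 \<le> p - 2 * (q / r) * q + (q / r)\<^sup>2 * r" by (rule discriminant)
    also have "\<dots> = (p * r - q\<^sup>2) / r" using \<open>r > 0\<close> by (simp add: field_simps power2_eq_square)
    finally show ?thesis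
      using \<open>r > 0\<close> by (simp add: p_def q_def r_def zero_le_divide_iff)
  qed
qed

lemma norm_psd_matrix_vector_le:
  fixes F :: "real^'n^'n"
  assumes sym: "transpose F = F" and psd: "\<And>x. 0 \<le> x \<bullet> (F *v x)"
  shows "(norm (F *v u))\<^sup>2 \<le> mat_norm F * (u \<bullet> (F *v u))"
proof -
  define w where "w = F *v u"
  have "(w \<bullet> w)\<^sup>2 \<le> (u \<bullet> (F *v u)) * (w \<bullet> (F *v w))"
    using psd_matrix_cauchy_schwarz[OF sym psd, of u w] symmetric_matrix_inner_commute[OF sym, of w u]
    by (simp add: w_def)
  also have "\<dots> \<le> (u \<bullet> (F *v u)) * (mat_norm F * (w \<bullet> w))"
  proof (rule mult_left_mono[OF _ psd])
    have "w \<bullet> (F *v w) \<le> norm w * (mat_norm F * norm w)"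
      by (rule order_trans[OF norm_cauchy_schwarz mult_left_mono[OF norm_matrix_vector_le_mat_norm]]) simp
    then show "w \<bullet> (F *v w) \<le> mat_norm F * (w \<bullet> w)"
      by (simp add: power2_norm_eq_inner[symmetric] power2_eq_square mult_ac)
  qed
  finally have "(w \<bullet> w) * (w \<bullet> w) \<le> (mat_norm F * (u \<bullet> (F *v u))) * (w \<bullet> w)"
    by (simp add: power2_eq_square mult_ac)
  then have "w \<bullet> w \<le> mat_norm F * (u \<bullet> (F *v u))"
    using psd[of u] mat_norm_nonneg[of F] by (cases "w = 0") auto
  then show ?thesis by (simp add: w_def power2_norm_eq_inner)
qed

lemma inner_le_mat_norm_mult_inverse_form:
  fixes F P :: "real^'n^'n"
  assumes FP: "F ** P = mat 1" and sym: "transpose F = F" and psd: "\<And>x. 0 \<le> x \<bullet> (F *v x)"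
  shows "v \<bullet> v \<le> mat_norm F * (v \<bullet> (P *v v))"
proof -
  have v: "F *v (P *v v) = v" by (simp add: matrix_vector_mul_assoc FP)
  show ?thesis
    using norm_psd_matrix_vector_le[OF sym psd, of "P *v v"]
    by (simp add: v power2_norm_eq_inner inner_commute)
qed

lemma mat_norm_le_of_inverse_coercive:
  fixes F P :: "real^'n^'n"
  assumes PF: "P ** F = mat 1" and "0 < c" and coercive: "\<And>v. c * (v \<bullet> v) \<le> v \<bullet> (P *v v)"
  shows "mat_norm F \<le> 1 / c"
  unfolding mat_norm_def
proof (rule onorm_le)
  fix x :: "real^'n"
  define w where "w = F *v x"
  have "P *v w = x" unfolding w_def by (simp add: matrix_vector_mul_assoc PF)
  then have "c * (norm w * norm w) \<le> norm w * norm x"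
    using coercive[of w] norm_cauchy_schwarz[of w x]
    by (simp add: power2_norm_eq_inner[symmetric] power2_eq_square)
  then have "c * norm w \<le> norm x"
    by (cases "norm w = 0") (auto simp: mult.assoc[symmetric] mult.commute[of c])
  then show "norm (F *v x) \<le> 1 / c * norm x"
    unfolding w_def using \<open>0 < c\<close> by (simp add: field_simps)
qed

section \<open>Linear differential equations\<close>

lemma has_real_derivative_nonneg_imp_le:
  fixes f :: "real \<Rightarrow> real"
  assumes "a \<le> b"
    and deriv: "\<And>x. a \<le> x \<Longrightarrow> x \<le> b \<Longrightarrow> (f has_real_derivative f' x) (at x within {a..b})"
    and nonneg: "\<And>x. a < x \<Longrightarrow> x < b \<Longrightarrow> 0 \<le> f' x"
  shows "f a \<le> f b"
proof (cases "a = b")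
  case False
  with \<open>a \<le> b\<close> have "a < b" by simp
  then obtain x where "x \<in> {a<..<b}" "f b - f a = (b - a) * f' x"
    using mvt_simple[of a b f "\<lambda>x h. h * f' x"] deriv
    by (auto simp: has_field_derivative_def mult.commute[of _ "f' _"])
  moreover have "0 \<le> (b - a) * f' x"
    using nonneg[of x] \<open>a < b\<close> \<open>x \<in> {a<..<b}\<close> by simp
  ultimately show ?thesis by simp
qed simp

lemma linear_growth_ode_zero:
  fixes f :: "real \<Rightarrow> 'a::real_inner"
  assumes "0 \<le> T" and "0 \<le> L"
    and deriv: "\<And>t. 0 \<le> t \<Longrightarrow> t \<le> T \<Longrightarrow> (f has_vector_derivative f' t) (at t within {0..T})"
    and growth: "\<And>t. 0 \<le> t \<Longrightarrow> t \<le> T \<Longrightarrow> norm (f' t) \<le> L * norm (f t)"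
    and "f 0 = 0"
  shows "f T = 0"
proof -
  define g where "g t = - exp (- 2 * L * t) * (f t \<bullet> f t)" for t
  define g' where "g' t = exp (- 2 * L * t) * (2 * L * (f t \<bullet> f t) - 2 * (f t \<bullet> f' t))" for t
  have "(g has_real_derivative g' t) (at t within {0..T})" if "0 \<le> t" "t \<le> T" for t
  proof -
    have "((\<lambda>t. f t \<bullet> f t) has_real_derivative 2 * (f t \<bullet> f' t)) (at t within {0..T})"
      using bounded_bilinear.has_vector_derivative[OF bounded_bilinear_inner deriv[OF that] deriv[OF that]]
      by (simp add: has_real_derivative_iff_has_vector_derivative inner_commute)
    then show ?thesis
      unfolding g_def g'_def by (auto intro!: derivative_eq_intros simp: algebra_simps)
  qed
  moreover have "0 \<le> g' t" if "0 \<le> t" "t \<le> T" for t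
  proof -
    have "f t \<bullet> f' t \<le> norm (f t) * (L * norm (f t))"
      using norm_cauchy_schwarz[of "f t" "f' t"] growth[OF that] by (meson mult_left_mono norm_ge_zero order_trans)
    then show ?thesis
      by (simp add: g'_def power2_norm_eq_inner[symmetric] power2_eq_square mult_ac)
  qed
  ultimately have "g 0 \<le> g T"
    using has_real_derivative_nonneg_imp_le[of 0 T g g'] \<open>0 \<le> T\<close> by simp
  with \<open>f 0 = 0\<close> have "f T \<bullet> f T \<le> 0"
    by (simp add: g_def mult_le_0_iff)
  then show ?thesis by (metis inner_eq_zero_iff inner_ge_zero order_antisym)
qed

lemma bounded_bilinear_ode_zero:
  fixes x :: "real \<Rightarrow> 'b::real_inner" and A :: "real \<Rightarrow> 'a::real_normed_vector"
  assumes b: "bounded_bilinear b" and "0 \<le> T" and A: "continuous_on {0..T} A"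
    and deriv: "\<And>t. 0 \<le> t \<Longrightarrow> t \<le> T \<Longrightarrow> (x has_vector_derivative b (A t) (x t)) (at t within {0..T})"
    and "x 0 = 0"
  shows "x T = 0"
proof -
  have "bounded (A ` {0..T})"
    by (rule compact_imp_bounded[OF compact_continuous_image[OF A compact_Icc]])
  then obtain B where B: "\<And>t. t \<in> {0..T} \<Longrightarrow> norm (A t) \<le> B"
    unfolding bounded_iff by blast
  obtain K where K: "\<And>u v. norm (b u v) \<le> norm u * norm v * K" "0 \<le> K"
    using bounded_bilinear.nonneg_bounded[OF b] by metis
  show ?thesis
  proof (rule linear_growth_ode_zero[OF \<open>0 \<le> T\<close> _ deriv _ \<open>x 0 = 0\<close>])
    show "0 \<le> max 0 B * K" using K by simp
    fix t assume "0 \<le> t" "t \<le> T"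
    then have "norm (A t) * norm (x t) * K \<le> max 0 B * norm (x t) * K"
      using B[of t] K by (intro mult_right_mono) auto
    then show "norm (b (A t) (x t)) \<le> max 0 B * K * norm (x t)"
      using K(1)[of "A t" "x t"] by (simp add: mult_ac)
  qed
qed

lemma scalar_linear_ode_solution:
  fixes x :: "real \<Rightarrow> 'a::real_normed_vector"
  assumes g: "continuous_on {0..} g"
    and deriv: "\<And>t. 0 \<le> t \<Longrightarrow> (x has_vector_derivative (- g t) *\<^sub>R (x t - c)) (at t within {0..})"
    and "0 \<le> t"
  shows "x t = c + exp (- integral {0..t} g) *\<^sub>R (x 0 - c)"
proof -
  define G where "G s = integral {0..s} g" for s
  have "((\<lambda>s. exp (G s) *\<^sub>R (x s - c)) has_vector_derivative 0) (at s within {0..t})"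
    if "s \<in> {0..t}" for s
  proof -
    have "(G has_real_derivative g s) (at s within {0..t})"
      unfolding G_def has_real_derivative_iff_has_vector_derivative
      by (rule integral_has_vector_derivative[OF continuous_on_subset[OF g]]) (use that in auto)
    moreover have "(x has_vector_derivative (- g s) *\<^sub>R (x s - c)) (at s within {0..t})"
      using deriv[of s] that by (auto intro: has_vector_derivative_within_subset)
    ultimately show ?thesis
      by (auto intro!: derivative_eq_intros simp: algebra_simps)
  qed
  then have "\<exists>k. \<forall>s\<in>{0..t}. exp (G s) *\<^sub>R (x s - c) = k"
    by (intro has_derivative_zero_constant) (auto simp: has_vector_derivative_def)
  then obtain k where "\<forall>s\<in>{0..t}. exp (G s) *\<^sub>R (x s - c) = k" ..
  with \<open>0 \<le> t\<close> have "exp (G t) *\<^sub>R (x t - c) = x 0 - c"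
    by (force simp: G_def)
  then have "exp (- G t) *\<^sub>R (exp (G t) *\<^sub>R (x t - c)) = exp (- G t) *\<^sub>R (x 0 - c)"
    by simp
  then have "x t - c = exp (- G t) *\<^sub>R (x 0 - c)"
    by (simp add: exp_minus)
  then show ?thesis
    by (simp add: G_def diff_eq_eq add.commute)
qed

lemma integral_ge_linear_after:
  fixes f :: "real \<Rightarrow> real"
  assumes f: "continuous_on {0..} f" and nonneg: "\<And>s. 0 \<le> s \<Longrightarrow> 0 \<le> f s"
    and "0 \<le> c" and "0 \<le> t\<^sub>0" and lower: "\<And>s. t\<^sub>0 \<le> s \<Longrightarrow> c \<le> f s" and "0 \<le> t"
  shows "c * (t - t\<^sub>0) \<le> integral {0..t} f"
proof -
  have integrable: "f integrable_on {a..b}" if "0 \<le> a" for a b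
    by (intro integrable_continuous_interval continuous_on_subset[OF f]) (use that in auto)
  show ?thesis
  proof (cases "t \<le> t\<^sub>0")
    case True
    have "0 \<le> integral {0..t} f"
      using nonneg by (intro integral_nonneg integrable) auto
    moreover have "c * (t - t\<^sub>0) \<le> 0"
      using True \<open>0 \<le> c\<close> by (simp add: mult_nonneg_nonpos)
    ultimately show ?thesis by linarith
  next
    case False
    have "0 \<le> integral {0..t\<^sub>0} f"
      using nonneg by (intro integral_nonneg integrable) auto
    moreover have "integral {t\<^sub>0..t} (\<lambda>_. c) \<le> integral {t\<^sub>0..t} f"
      using lower \<open>0 \<le> t\<^sub>0\<close> by (intro integral_le integrable) auto
    moreover have "integral {0..t\<^sub>0} f + integral {t\<^sub>0..t} f = integral {0..t} f"
      using False \<open>0 \<le> t\<^sub>0\<close> by (intro Henstock_Kurzweil_Integration.integral_combine integrable) auto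
    ultimately show ?thesis
      using False by (simp add: mult.commute)
  qed
qed

section \<open>Least squares with forgetting factor\<close>

definition outer :: "real^'n \<Rightarrow> real^'n^'n" where
  "outer v = (\<chi> i j. v$i * v$j)"

lemma outer_mult_vector: "outer v *v x = (v \<bullet> x) *\<^sub>R v"
  by (simp add: outer_def vec_eq_iff matrix_vector_mult_def inner_vec_def sum_distrib_left mult_ac)

lemma transpose_outer: "transpose (outer v) = outer v"
  by (simp add: outer_def transpose_def vec_eq_iff mult.commute)

lemma quadratic_form_outer: "x \<bullet> (outer v *v x) = (v \<bullet> x)\<^sup>2"
  by (simp add: outer_mult_vector power2_eq_square inner_commute)

lemma continuous_on_outer:
  fixes \<phi> :: "'a::topological_space \<Rightarrow> real^'n"
  assumes "continuous_on S \<phi>"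
  shows "continuous_on S (\<lambda>s. outer (\<phi> s))"
  unfolding outer_def by (intro continuous_intros assms)

locale forgetting_least_squares =
  fixes \<phi> :: "real \<Rightarrow> real^'n" and \<alpha> f0 \<beta>0 M :: real
    and F :: "real \<Rightarrow> real^'n^'n" and z \<beta> :: "real \<Rightarrow> real"
  assumes continuous_phi: "continuous_on {0..} \<phi>"
    and alpha_pos: "0 < \<alpha>" and f0_pos: "0 < f0" and beta0_pos: "0 < \<beta>0" and M_ge: "1 / f0 \<le> M"
    and beta_eq: "\<And>t. \<beta> t = \<beta>0 * (1 - mat_norm (F t) / M)"
    and F_deriv: "\<And>t. 0 \<le> t \<Longrightarrow> (F has_vector_derivative
          - \<alpha> *\<^sub>R (F t ** outer (\<phi> t) ** F t) + \<beta> t *\<^sub>R F t) (at t within {0..})"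
    and F_0: "F 0 = (1 / f0) *\<^sub>R mat 1"
    and z_deriv: "\<And>t. 0 \<le> t \<Longrightarrow> (z has_real_derivative - \<beta> t * z t) (at t within {0..})"
    and z_0: "z 0 = 1"
begin

lemma M_pos: "0 < M"
  using M_ge f0_pos by (metis less_le_trans zero_less_divide_1_iff)

lemma F_deriv_within:
  "0 \<le> t \<Longrightarrow> (F has_vector_derivative
      - \<alpha> *\<^sub>R (F t ** outer (\<phi> t) ** F t) + \<beta> t *\<^sub>R F t) (at t within {0..T})"
  using F_deriv by (rule has_vector_derivative_within_subset) auto

lemma z_deriv_within: "0 \<le> t \<Longrightarrow> (z has_real_derivative - \<beta> t * z t) (at t within {0..T})"
  using z_deriv by (rule DERIV_subset) auto

lemma continuous_on_F: "continuous_on {0..} F"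
  using F_deriv by (auto intro!: continuous_on_vector_derivative)

lemma continuous_on_z: "continuous_on {0..} z"
  using z_deriv by (auto simp: continuous_on_eq_continuous_within intro!: DERIV_continuous)

lemma continuous_on_beta: "continuous_on {0..} \<beta>"
  unfolding beta_eq[abs_def]
  by (intro continuous_intros continuous_on_mat_norm continuous_on_F) (use M_pos in auto)

lemma z_eq_exp: "0 \<le> t \<Longrightarrow> z t = exp (- integral {0..t} \<beta>)"
  using scalar_linear_ode_solution[OF continuous_on_beta, of z 0 t] z_deriv z_0
  by (simp add: has_real_derivative_iff_has_vector_derivative)

lemma z_pos: "0 \<le> t \<Longrightarrow> 0 < z t"
  by (simp add: z_eq_exp)

definition J :: "real \<Rightarrow> real^'n^'n" where
  "J t = integral {0..t} (\<lambda>s. (1 / z s) *\<^sub>R outer (\<phi> s))"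

text \<open>The information matrix: the solution of \<open>P' = - \<beta> P + \<alpha> \<phi> \<phi>\<^sup>T\<close>, \<open>P 0 = f0 I\<close>, whose inverse
  is \<open>F\<close>.\<close>

definition P :: "real \<Rightarrow> real^'n^'n" where
  "P t = z t *\<^sub>R (f0 *\<^sub>R mat 1 + \<alpha> *\<^sub>R J t)"

lemma continuous_on_J_integrand: "continuous_on {0..} (\<lambda>s. (1 / z s) *\<^sub>R outer (\<phi> s))"
  by (intro continuous_intros continuous_on_outer continuous_phi continuous_on_z) (use z_pos in force)

lemma J_integrable: "(\<lambda>s. (1 / z s) *\<^sub>R outer (\<phi> s)) integrable_on {0..t}"
  by (intro integrable_continuous_interval continuous_on_subset[OF continuous_on_J_integrand]) auto

lemma P_deriv:
  assumes "0 \<le> t" "t \<le> T"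
  shows "(P has_vector_derivative (- \<beta> t) *\<^sub>R P t + \<alpha> *\<^sub>R outer (\<phi> t)) (at t within {0..T})"
proof -
  have "(J has_vector_derivative (1 / z t) *\<^sub>R outer (\<phi> t)) (at t within {0..T})"
    unfolding J_def
    by (rule integral_has_vector_derivative[OF continuous_on_subset[OF continuous_on_J_integrand]])
       (use assms in auto)
  then have "(P has_vector_derivative z t *\<^sub>R (\<alpha> *\<^sub>R ((1 / z t) *\<^sub>R outer (\<phi> t)))
      + (- \<beta> t * z t) *\<^sub>R (f0 *\<^sub>R mat 1 + \<alpha> *\<^sub>R J t)) (at t within {0..T})"
    unfolding P_def[abs_def] using z_deriv_within[OF assms(1)]
    by (auto intro!: derivative_eq_intros)
  then show ?thesis
    using z_pos[OF assms(1)] by (simp add: P_def algebra_simps)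
qed

lemma F_mult_P:
  assumes "0 \<le> t"
  shows "F t ** P t = mat 1"
proof -
  have "(\<lambda>s. F s ** P s - mat 1) t = 0"
  proof (rule bounded_bilinear_ode_zero[OF bounded_bilinear_matrix_matrix_mult assms,
        where A = "\<lambda>s. - \<alpha> *\<^sub>R (F s ** outer (\<phi> s))"])
    show "continuous_on {0..t} (\<lambda>s. - \<alpha> *\<^sub>R (F s ** outer (\<phi> s)))"
      by (intro continuous_intros bounded_bilinear.continuous_on[OF bounded_bilinear_matrix_matrix_mult]
          continuous_on_outer continuous_on_subset[OF continuous_on_F] continuous_on_subset[OF continuous_phi]) auto
    show "F 0 ** P 0 - mat 1 = 0"
      using f0_pos by (simp add: F_0 P_def J_def z_0 matrix_scalar_ac scalar_matrix_assoc[symmetric])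
    fix s assume s: "0 \<le> s" "s \<le> t"
    have "((\<lambda>s. F s ** P s - mat 1) has_vector_derivative
        F s ** ((- \<beta> s) *\<^sub>R P s + \<alpha> *\<^sub>R outer (\<phi> s))
        + (- \<alpha> *\<^sub>R (F s ** outer (\<phi> s) ** F s) + \<beta> s *\<^sub>R F s) ** P s) (at s within {0..t})"
      using bounded_bilinear.has_vector_derivative[OF bounded_bilinear_matrix_matrix_mult
          F_deriv_within[OF s(1)] P_deriv[OF s]]
      by (simp add: has_vector_derivative_diff_const)
    then show "((\<lambda>s. F s ** P s - mat 1) has_vector_derivative
        - \<alpha> *\<^sub>R (F s ** outer (\<phi> s)) ** (F s ** P s - mat 1)) (at s within {0..t})"
      by (simp add: matrix_add_ldistrib matrix_add_rdistrib matrix_diff_ldistrib matrix_diff_rdistrib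
          matrix_minus_left matrix_minus_right matrix_scalar_ac scalar_matrix_assoc[symmetric]
          matrix_mul_assoc algebra_simps)
  qed
  then show ?thesis by simp
qed

lemma P_mult_F: "0 \<le> t \<Longrightarrow> P t ** F t = mat 1"
  using F_mult_P matrix_left_right_inverse by blast

lemma J_quadratic_form: "v \<bullet> (J t *v v) = integral {0..t} (\<lambda>s. (\<phi> s \<bullet> v)\<^sup>2 / z s)"
proof -
  have "v \<bullet> (J t *v v) = integral {0..t} ((\<lambda>A. v \<bullet> (A *v v)) \<circ> (\<lambda>s. (1 / z s) *\<^sub>R outer (\<phi> s)))"
    unfolding J_def by (rule integral_linear[OF J_integrable bounded_linear_quadratic_form, symmetric])
  then show ?thesis
    by (simp add: o_def scaleR_matrix_vector_assoc[symmetric] quadratic_form_outer)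
qed

lemma J_nonneg: "0 \<le> v \<bullet> (J t *v v)"
proof -
  have "(\<lambda>s. (\<phi> s \<bullet> v)\<^sup>2 / z s) integrable_on {0..t}"
    by (intro integrable_continuous_interval continuous_intros continuous_on_subset[OF continuous_phi]
        continuous_on_subset[OF continuous_on_z]) (use z_pos in force)+
  then show ?thesis
    unfolding J_quadratic_form
    by (rule integral_nonneg) (use z_pos in \<open>auto intro!: divide_nonneg_pos\<close>)
qed

lemma transpose_J: "transpose (J t) = J t"
proof -
  have "transpose (J t) = integral {0..t} (transpose \<circ> (\<lambda>s. (1 / z s) *\<^sub>R outer (\<phi> s)))"
    unfolding J_def by (rule integral_linear[OF J_integrable bounded_linear_transpose, symmetric])
  then show ?thesis
    by (simp add: o_def J_def transpose_scalar transpose_outer)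
qed

lemma transpose_P: "transpose (P t) = P t"
  by (simp add: P_def transpose_scalar transpose_add transpose_J)

lemma P_quadratic_form: "v \<bullet> (P t *v v) = z t * f0 * (v \<bullet> v) + z t * \<alpha> * (v \<bullet> (J t *v v))"
  by (simp add: P_def scaleR_matrix_vector_assoc[symmetric] algebra_simps)

lemma P_coercive: "0 \<le> t \<Longrightarrow> z t * f0 * (v \<bullet> v) \<le> v \<bullet> (P t *v v)"
  using z_pos[of t] alpha_pos J_nonneg[of v t] by (simp add: P_quadratic_form)

lemma P_nonneg: "0 \<le> t \<Longrightarrow> 0 \<le> v \<bullet> (P t *v v)"
  using P_coercive[of t v] z_pos[of t] f0_pos by (smt (verit) inner_ge_zero mult_nonneg_nonneg)

lemma transpose_F: "0 \<le> t \<Longrightarrow> transpose (F t) = F t"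
  by (metis P_mult_F matrix_transpose_mul matrix_mul_lid matrix_mul_rid matrix_mul_assoc transpose_P)

lemma F_nonneg:
  assumes "0 \<le> t"
  shows "0 \<le> x \<bullet> (F t *v x)"
proof -
  have "x = P t *v (F t *v x)"
    by (simp add: matrix_vector_mul_assoc P_mult_F[OF assms])
  then have "x \<bullet> (F t *v x) = (F t *v x) \<bullet> (P t *v (F t *v x))"
    by (metis inner_commute)
  then show ?thesis using P_nonneg[OF assms] by simp
qed

lemma P_quadratic_form_mono:
  assumes "0 \<le> a" "a \<le> b" and beta_nonpos: "\<And>s. a < s \<Longrightarrow> s < b \<Longrightarrow> \<beta> s \<le> 0"
  shows "v \<bullet> (P a *v v) \<le> v \<bullet> (P b *v v)"
proof (rule has_real_derivative_nonneg_imp_le[OF \<open>a \<le> b\<close>])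
  fix s assume s: "a \<le> s" "s \<le> b"
  have "((\<lambda>s. v \<bullet> (P s *v v)) has_vector_derivative
      v \<bullet> (((- \<beta> s) *\<^sub>R P s + \<alpha> *\<^sub>R outer (\<phi> s)) *v v)) (at s within {0..b})"
    using bounded_linear.has_vector_derivative[OF bounded_linear_quadratic_form P_deriv] s assms(1)
    by simp
  moreover have "v \<bullet> (((- \<beta> s) *\<^sub>R P s + \<alpha> *\<^sub>R outer (\<phi> s)) *v v)
      = - \<beta> s * (v \<bullet> (P s *v v)) + \<alpha> * (\<phi> s \<bullet> v)\<^sup>2"
    by (simp add: scaleR_matrix_vector_assoc[symmetric] matrix_vector_mult_diff_rdistrib
        inner_diff_right quadratic_form_outer)
  ultimately show "((\<lambda>s. v \<bullet> (P s *v v)) has_real_derivative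
      - \<beta> s * (v \<bullet> (P s *v v)) + \<alpha> * (\<phi> s \<bullet> v)\<^sup>2) (at s within {a..b})"
    using assms(1)
    by (auto intro: DERIV_subset simp: has_real_derivative_iff_has_vector_derivative[symmetric])
next
  fix s assume "a < s" "s < b"
  then show "0 \<le> - \<beta> s * (v \<bullet> (P s *v v)) + \<alpha> * (\<phi> s \<bullet> v)\<^sup>2"
    using beta_nonpos[of s] P_nonneg[of s v] alpha_pos assms(1)
    by (intro add_nonneg_nonneg mult_nonneg_nonneg) auto
qed

text \<open>After the last instant \<open>t\<^sub>0 \<le> t\<close> with \<open>mat_norm (F t\<^sub>0) \<le> M\<close>, the forgetting factor is
  negative, so \<open>P\<close> can only grow and \<open>P t \<ge> P t\<^sub>0 \<ge> 1 / M\<close>.\<close>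

lemma mat_norm_F_le:
  assumes "0 \<le> t"
  shows "mat_norm (F t) \<le> M"
proof -
  define S where "S = {0..t} \<inter> (\<lambda>s. mat_norm (F s)) -` {..M}"
  define t\<^sub>0 where "t\<^sub>0 = Sup S"
  have "closed S"
    unfolding S_def
    by (rule continuous_closed_preimage)
       (auto intro: continuous_on_subset[OF continuous_on_mat_norm[OF continuous_on_F]])
  have "mat_norm (F 0) \<le> 1 / f0"
    unfolding mat_norm_def F_0
    by (rule onorm_le) (use f0_pos in \<open>simp add: scaleR_matrix_vector_assoc[symmetric]\<close>)
  then have "0 \<in> S"
    using assms M_ge by (simp add: S_def)
  have "bdd_above S"
    unfolding S_def by (rule bdd_aboveI[where M = t]) auto
  with \<open>closed S\<close> \<open>0 \<in> S\<close> have "t\<^sub>0 \<in> S"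
    unfolding t\<^sub>0_def by (intro closed_contains_Sup) auto
  then have t\<^sub>0: "0 \<le> t\<^sub>0" "t\<^sub>0 \<le> t" "mat_norm (F t\<^sub>0) \<le> M"
    by (auto simp: S_def)
  have "(1 / M) * (v \<bullet> v) \<le> v \<bullet> (P t *v v)" for v
  proof -
    have "v \<bullet> v \<le> M * (v \<bullet> (P t\<^sub>0 *v v))"
      using inner_le_mat_norm_mult_inverse_form[OF F_mult_P transpose_F F_nonneg, of t\<^sub>0 v]
        mult_right_mono[OF t\<^sub>0(3) P_nonneg[of t\<^sub>0 v]] t\<^sub>0(1) by linarith
    also have "v \<bullet> (P t\<^sub>0 *v v) \<le> v \<bullet> (P t *v v)"
    proof (rule P_quadratic_form_mono[OF t\<^sub>0(1,2)])
      fix s assume s: "t\<^sub>0 < s" "s < t"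
      then have "s \<notin> S"
        using cSup_upper[OF _ \<open>bdd_above S\<close>, of s] by (auto simp: t\<^sub>0_def)
      then have "M < mat_norm (F s)"
        using s t\<^sub>0 by (auto simp: S_def)
      then show "\<beta> s \<le> 0"
        using M_pos beta0_pos by (simp add: beta_eq field_simps mult_le_0_iff)
    qed
    finally show ?thesis
      using M_pos by (simp add: field_simps)
  qed
  then show ?thesis
    using mat_norm_le_of_inverse_coercive[OF P_mult_F[OF assms], of "1 / M"] M_pos by simp
qed

lemma beta_nonneg: "0 \<le> t \<Longrightarrow> 0 \<le> \<beta> t"
  using mat_norm_F_le[of t] M_pos beta0_pos by (simp add: beta_eq field_simps)

lemma z_le_1:
  assumes "0 \<le> t"
  shows "z t \<le> 1"
proof -
  have "0 \<le> integral {0..t} \<beta>"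
    by (intro integral_nonneg integrable_continuous_interval continuous_on_subset[OF continuous_on_beta])
       (auto intro: beta_nonneg)
  then show ?thesis by (simp add: z_eq_exp[OF assms])
qed

lemma bounded_F: "bounded (F ` {0..})"
  unfolding bounded_iff
  using order_trans[OF norm_le_mat_norm mult_left_mono[OF mat_norm_F_le]] by auto

lemma bounded_z: "bounded (z ` {0..})"
proof -
  have "norm (z t) \<le> 1" if "0 \<le> t" for t
    using z_pos[OF that] z_le_1[OF that] by simp
  then show ?thesis unfolding bounded_iff by auto
qed

context
  fixes y :: "real \<Rightarrow> real" and \<eta> :: "real^'n" and \<mu> :: "real \<Rightarrow> real^'n"
  assumes regression: "\<And>t. 0 \<le> t \<Longrightarrow> y t = \<eta> \<bullet> \<phi> t"
    and mu_deriv: "\<And>t. 0 \<le> t \<Longrightarrow> (\<mu> has_vector_derivative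
          (\<alpha> * (y t - \<phi> t \<bullet> \<mu> t)) *\<^sub>R (F t *v \<phi> t)) (at t within {0..})"
begin

lemma estimate_closed_form:
  assumes "0 \<le> t"
  shows "\<mu> t = \<eta> + (z t * f0) *\<^sub>R (F t *v (\<mu> 0 - \<eta>))"
proof -
  define e where "e s = \<mu> s - \<eta> - (z s * f0) *\<^sub>R (F s *v (\<mu> 0 - \<eta>))" for s
  have "e t = 0"
  proof (rule bounded_bilinear_ode_zero[OF bounded_bilinear_matrix_vector_mult assms,
        where A = "\<lambda>s. - \<alpha> *\<^sub>R (F s ** outer (\<phi> s))"])
    show "continuous_on {0..t} (\<lambda>s. - \<alpha> *\<^sub>R (F s ** outer (\<phi> s)))"
      by (intro continuous_intros bounded_bilinear.continuous_on[OF bounded_bilinear_matrix_matrix_mult]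
          continuous_on_outer continuous_on_subset[OF continuous_on_F] continuous_on_subset[OF continuous_phi]) auto
    show "e 0 = 0"
      using f0_pos by (simp add: e_def F_0 z_0 scaleR_matrix_vector_assoc[symmetric])
    fix s assume s: "0 \<le> s" "s \<le> t"
    have "(\<mu> has_vector_derivative (\<alpha> * (y s - \<phi> s \<bullet> \<mu> s)) *\<^sub>R (F s *v \<phi> s)) (at s within {0..t})"
      using mu_deriv[OF s(1)] by (rule has_vector_derivative_within_subset) auto
    then have "(e has_vector_derivative (\<alpha> * (y s - \<phi> s \<bullet> \<mu> s)) *\<^sub>R (F s *v \<phi> s)
        - ((- \<beta> s * z s * f0) *\<^sub>R (F s *v (\<mu> 0 - \<eta>))
           + (z s * f0) *\<^sub>R ((- \<alpha> *\<^sub>R (F s ** outer (\<phi> s) ** F s) + \<beta> s *\<^sub>R F s) *v (\<mu> 0 - \<eta>))))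
        (at s within {0..t})"
      unfolding e_def[abs_def]
      using z_deriv_within[OF s(1)] F_deriv_within[OF s(1)]
      by (auto intro!: derivative_eq_intros
          bounded_linear.has_vector_derivative[OF bounded_bilinear.bounded_linear_left[OF
            bounded_bilinear_matrix_vector_mult]])
    then show "(e has_vector_derivative - \<alpha> *\<^sub>R (F s ** outer (\<phi> s)) *v e s) (at s within {0..t})"
      using regression[OF s(1)]
      by (simp add: e_def matrix_vector_mult_minus_left matrix_vector_mul_assoc[symmetric] outer_mult_vector
          scaleR_matrix_vector_assoc[symmetric] inner_commute algebra_simps)
  qed
  then show ?thesis by (simp add: e_def algebra_simps)
qed

lemma adjugate_regression:
  assumes "0 \<le> t"
  shows "adjugate (mat 1 - (z t * f0) *\<^sub>R F t) *v (\<mu> t - (z t * f0) *\<^sub>R (F t *v \<mu> 0))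
       = det (mat 1 - (z t * f0) *\<^sub>R F t) *\<^sub>R \<eta>"
proof -
  have "\<mu> t - (z t * f0) *\<^sub>R (F t *v \<mu> 0) = (mat 1 - (z t * f0) *\<^sub>R F t) *v \<eta>"
    by (simp add: estimate_closed_form[OF assms] scaleR_matrix_vector_assoc[symmetric] algebra_simps)
  then show ?thesis by (simp add: adjugate_mult_vector)
qed

lemma bounded_estimate: "bounded (\<mu> ` {0..})"
proof -
  have "norm (\<mu> t) \<le> norm \<eta> + f0 * (M * norm (\<mu> 0 - \<eta>))" if "0 \<le> t" for t
  proof -
    have "\<bar>z t * f0\<bar> \<le> f0"
      using z_pos[OF that] z_le_1[OF that] f0_pos by (simp add: abs_mult)
    moreover have "norm (F t *v (\<mu> 0 - \<eta>)) \<le> M * norm (\<mu> 0 - \<eta>)"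
      using norm_matrix_vector_le_mat_norm[of "F t" "\<mu> 0 - \<eta>"]
        mult_right_mono[OF mat_norm_F_le[OF that] norm_ge_zero[of "\<mu> 0 - \<eta>"]]
      by linarith
    ultimately have "norm ((z t * f0) *\<^sub>R (F t *v (\<mu> 0 - \<eta>))) \<le> f0 * (M * norm (\<mu> 0 - \<eta>))"
      unfolding norm_scaleR by (rule mult_mono) (use f0_pos in simp_all)
    then show ?thesis
      using estimate_closed_form[OF that] norm_triangle_ineq[of \<eta> "(z t * f0) *\<^sub>R (F t *v (\<mu> 0 - \<eta>))"]
      by simp
  qed
  then show ?thesis unfolding bounded_iff by auto
qed

end

context
  fixes Q :: "real^'n^'n" and c t\<^sub>c :: real
  assumes excitation_integral: "((\<lambda>s. outer (\<phi> s)) has_integral Q) {0..t\<^sub>c}"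
    and excitation: "\<And>v. c * (v \<bullet> v) \<le> v \<bullet> (Q *v v)"
    and c_pos: "0 < c" and t\<^sub>c_nonneg: "0 \<le> t\<^sub>c"
begin

lemma J_ge_excitation:
  assumes "t\<^sub>c \<le> t"
  shows "c * (v \<bullet> v) \<le> v \<bullet> (J t *v v)"
proof -
  have integrable: "(\<lambda>s. (\<phi> s \<bullet> v)\<^sup>2 / z s) integrable_on {0..t}" for t
    by (intro integrable_continuous_interval continuous_intros continuous_on_subset[OF continuous_phi]
        continuous_on_subset[OF continuous_on_z]) (use z_pos in force)+
  have "((\<lambda>s. (\<phi> s \<bullet> v)\<^sup>2) has_integral v \<bullet> (Q *v v)) {0..t\<^sub>c}"
    using has_integral_linear[OF excitation_integral bounded_linear_quadratic_form[of v]]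
    by (simp add: o_def quadratic_form_outer)
  then have "c * (v \<bullet> v) \<le> integral {0..t\<^sub>c} (\<lambda>s. (\<phi> s \<bullet> v)\<^sup>2)"
    using excitation[of v] by (simp add: integral_unique)
  also have "\<dots> \<le> integral {0..t\<^sub>c} (\<lambda>s. (\<phi> s \<bullet> v)\<^sup>2 / z s)"
  proof (rule integral_le[OF _ integrable])
    show "(\<lambda>s. (\<phi> s \<bullet> v)\<^sup>2) integrable_on {0..t\<^sub>c}"
      using \<open>((\<lambda>s. (\<phi> s \<bullet> v)\<^sup>2) has_integral _) _\<close> by blast
    fix s assume "s \<in> {0..t\<^sub>c}"
    then show "(\<phi> s \<bullet> v)\<^sup>2 \<le> (\<phi> s \<bullet> v)\<^sup>2 / z s"
      using z_pos[of s] z_le_1[of s] by (simp add: le_divide_eq mult_left_le)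
  qed
  also have "\<dots> \<le> integral {0..t} (\<lambda>s. (\<phi> s \<bullet> v)\<^sup>2 / z s)"
    by (rule integral_subset_le)
       (use assms t\<^sub>c_nonneg integrable z_pos in \<open>auto intro!: divide_nonneg_pos\<close>)
  finally show ?thesis by (simp add: J_quadratic_form)
qed

text \<open>Since \<open>mat 1 - z f0 F = z \<alpha> F J\<close>, its inverse is \<open>mat 1 + (f0 / \<alpha>) J\<^sup>-\<^sup>1\<close>, bounded via
  \<open>J \<ge> c\<close>.\<close>

lemma norm_le_mult_I_minus_F:
  assumes "t\<^sub>c \<le> t"
  shows "norm w \<le> (1 + f0 / (\<alpha> * c)) * norm ((mat 1 - (z t * f0) *\<^sub>R F t) *v w)"
proof -
  define x where "x = (mat 1 - (z t * f0) *\<^sub>R F t) *v w"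
  define d where "d = w - x"
  have "0 \<le> t" using assms t\<^sub>c_nonneg by simp
  have "P t *v x = P t *v w - (z t * f0) *\<^sub>R w"
    by (simp add: x_def matrix_vector_mult_diff_rdistrib scaleR_matrix_vector_assoc[symmetric]
        matrix_vector_mult_diff_distrib matrix_vector_mult_scaleR matrix_vector_mul_assoc P_mult_F[OF \<open>0 \<le> t\<close>])
  then have "z t *\<^sub>R (\<alpha> *\<^sub>R (J t *v d)) = z t *\<^sub>R (f0 *\<^sub>R x)"
    by (simp add: P_def d_def scaleR_matrix_vector_assoc[symmetric] algebra_simps)
  then have Jd: "\<alpha> *\<^sub>R (J t *v d) = f0 *\<^sub>R x"
    using z_pos[OF \<open>0 \<le> t\<close>] by (metis scaleR_cancel_left less_irrefl)
  have "\<alpha> * c * (norm d * norm d) \<le> \<alpha> * (d \<bullet> (J t *v d))"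
    using J_ge_excitation[OF assms, of d] alpha_pos
    by (simp add: power2_norm_eq_inner[symmetric] power2_eq_square)
  also have "\<dots> = f0 * (d \<bullet> x)"
    using arg_cong[OF Jd, of "\<lambda>u. d \<bullet> u"] by simp
  also have "\<dots> \<le> f0 * (norm d * norm x)"
    using f0_pos norm_cauchy_schwarz[of d x] by simp
  finally have "\<alpha> * c * norm d \<le> f0 * norm x"
    by (cases "norm d = 0") (use f0_pos in auto)
  then have "norm d \<le> f0 / (\<alpha> * c) * norm x"
    using alpha_pos c_pos by (simp add: field_simps)
  have "norm w \<le> norm x + norm d"
    using norm_triangle_ineq[of x d] by (simp add: d_def)
  also have "\<dots> \<le> (1 + f0 / (\<alpha> * c)) * norm x"
    using \<open>norm d \<le> f0 / (\<alpha> * c) * norm x\<close> by (simp add: algebra_simps)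
  finally show ?thesis unfolding x_def .
qed

lemma abs_det_I_minus_F_ge:
  assumes "t\<^sub>c \<le> t"
  shows "1 / (fact CARD('n) * (1 + f0 / (\<alpha> * c)) ^ CARD('n)) \<le> \<bar>det (mat 1 - (z t * f0) *\<^sub>R F t)\<bar>"
  by (rule abs_det_ge_of_inverse_bound[OF norm_le_mult_I_minus_F[OF assms]])

end

end

section \<open>Convergence of the parameter estimates\<close>

lemma gradient_estimator_exponential_convergence:
  fixes x :: "real \<Rightarrow> 'a::real_normed_vector" and \<Delta> :: "real \<Rightarrow> real"
  assumes "continuous_on {0..} \<Delta>" and "0 < \<gamma>" and "0 \<le> \<delta>" and "0 \<le> t\<^sub>c"
    and \<Delta>_ge: "\<And>t. t\<^sub>c \<le> t \<Longrightarrow> \<delta> \<le> \<bar>\<Delta> t\<bar>"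
    and deriv: "\<And>t. 0 \<le> t \<Longrightarrow>
      (x has_vector_derivative (\<gamma> * \<Delta> t) *\<^sub>R (\<Delta> t *\<^sub>R c - \<Delta> t *\<^sub>R x t)) (at t within {0..})"
  obtains E where "\<And>t. 0 \<le> t \<Longrightarrow> x t = c + E t *\<^sub>R (x 0 - c)"
    and "\<And>t. 0 < E t" and "\<And>t. 0 \<le> t \<Longrightarrow> E t \<le> 1"
    and "\<And>t. 0 \<le> t \<Longrightarrow> E t \<le> exp (\<gamma> * \<delta>\<^sup>2 * t\<^sub>c) * exp (- (\<gamma> * \<delta>\<^sup>2) * t)"
proof
  define g where "g t = \<gamma> * (\<Delta> t)\<^sup>2" for t
  have g: "continuous_on {0..} g"
    unfolding g_def by (intro continuous_intros assms(1))
  have int_g: "\<gamma> * \<delta>\<^sup>2 * (t - t\<^sub>c) \<le> integral {0..t} g" if "0 \<le> t" for t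
  proof (rule integral_ge_linear_after[OF g _ _ \<open>0 \<le> t\<^sub>c\<close> _ that])
    fix s :: real assume "t\<^sub>c \<le> s"
    then have "\<delta>\<^sup>2 \<le> (\<Delta> s)\<^sup>2"
      using \<Delta>_ge[of s] \<open>0 \<le> \<delta>\<close> by (metis abs_le_square_iff abs_of_nonneg)
    then show "\<gamma> * \<delta>\<^sup>2 \<le> g s" using \<open>0 < \<gamma>\<close> by (simp add: g_def)
  qed (use \<open>0 < \<gamma>\<close> in \<open>auto simp: g_def\<close>)
  define E where "E t = exp (- integral {0..t} g)" for t
  show "x t = c + E t *\<^sub>R (x 0 - c)" if "0 \<le> t" for t
    unfolding E_def
  proof (rule scalar_linear_ode_solution[OF g _ that])
    fix s :: real assume "0 \<le> s"
    then show "(x has_vector_derivative (- g s) *\<^sub>R (x s - c)) (at s within {0..})"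
      using deriv[of s] by (simp add: g_def power2_eq_square algebra_simps)
  qed
  show "0 < E t" for t by (simp add: E_def)
  show "E t \<le> 1" if "0 \<le> t" for t
  proof -
    have "0 \<le> integral {0..t} g"
      by (intro integral_nonneg integrable_continuous_interval continuous_on_subset[OF g])
         (use \<open>0 < \<gamma>\<close> in \<open>auto simp: g_def\<close>)
    then show ?thesis by (simp add: E_def)
  qed
  show "E t \<le> exp (\<gamma> * \<delta>\<^sup>2 * t\<^sub>c) * exp (- (\<gamma> * \<delta>\<^sup>2) * t)" if "0 \<le> t" for t
    using int_g[OF that] by (simp add: E_def flip: exp_add) (simp add: algebra_simps)
qed

definition theta_of_eta :: "real^4 \<Rightarrow> real^4" where
  "theta_of_eta h = vector [h$1 / h$3, h$2, h$3, h$4]"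

lemma theta_of_eta_segment_error:
  assumes "0 < \<eta>$3" and "0 < \<eta>\<^sub>0$3"
  obtains K where "\<And>E. 0 \<le> E \<Longrightarrow> E \<le> 1 \<Longrightarrow>
    norm (theta_of_eta (\<eta> + E *\<^sub>R (\<eta>\<^sub>0 - \<eta>)) - theta_of_eta \<eta>) \<le> E * K"
proof
  define e m where "e = \<eta>\<^sub>0 - \<eta>" and "m = min (\<eta>$3) (\<eta>\<^sub>0$3)"
  have "0 < m" using assms by (simp add: m_def)
  fix E :: real assume "0 \<le> E" "E \<le> 1"
  define h where "h = \<eta> + E *\<^sub>R e"
  have "m \<le> h$3"
  proof -
    have "h$3 = (1 - E) * \<eta>$3 + E * \<eta>\<^sub>0$3" by (simp add: h_def e_def algebra_simps)
    moreover have "(1 - E) * m \<le> (1 - E) * \<eta>$3" "E * m \<le> E * \<eta>\<^sub>0$3"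
      using \<open>0 \<le> E\<close> \<open>E \<le> 1\<close> by (auto intro: mult_left_mono simp: m_def)
    ultimately show ?thesis by (simp add: algebra_simps)
  qed
  then have "0 < h$3" using \<open>0 < m\<close> by simp
  have "theta_of_eta h $ 1 - theta_of_eta \<eta> $ 1 = E * (\<eta>$3 * e$1 - \<eta>$1 * e$3) / (h$3 * \<eta>$3)"
    using \<open>0 < h$3\<close> assms(1) by (simp add: theta_of_eta_def h_def field_simps)
  also have "\<bar>\<dots>\<bar> \<le> E * (\<eta>$3 * \<bar>e$1\<bar> + \<bar>\<eta>$1\<bar> * \<bar>e$3\<bar>) / (m * \<eta>$3)"
    unfolding abs_divide
  proof (rule frac_le)
    show "\<bar>E * (\<eta>$3 * e$1 - \<eta>$1 * e$3)\<bar> \<le> E * (\<eta>$3 * \<bar>e$1\<bar> + \<bar>\<eta>$1\<bar> * \<bar>e$3\<bar>)"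
      using \<open>0 \<le> E\<close> assms(1) abs_triangle_ineq4[of "\<eta>$3 * e$1" "\<eta>$1 * e$3"]
      by (simp add: abs_mult mult_left_mono)
    show "m * \<eta>$3 \<le> \<bar>h$3 * \<eta>$3\<bar>"
      using \<open>m \<le> h$3\<close> \<open>0 < m\<close> assms(1) by (simp add: abs_mult mult_right_mono)
  qed (use \<open>0 \<le> E\<close> \<open>0 < m\<close> assms(1) in auto)
  finally have first: "\<bar>(theta_of_eta h - theta_of_eta \<eta>) $ 1\<bar>
      \<le> E * ((\<eta>$3 * \<bar>e$1\<bar> + \<bar>\<eta>$1\<bar> * \<bar>e$3\<bar>) / (m * \<eta>$3))"
    by simp
  have "norm (theta_of_eta h - theta_of_eta \<eta>) \<le> (\<Sum>k\<in>UNIV. \<bar>(theta_of_eta h - theta_of_eta \<eta>) $ k\<bar>)"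
    by (rule norm_le_l1_cart)
  also have "\<dots> \<le> E * ((\<eta>$3 * \<bar>e$1\<bar> + \<bar>\<eta>$1\<bar> * \<bar>e$3\<bar>) / (m * \<eta>$3) + \<bar>e$2\<bar> + \<bar>e$3\<bar> + \<bar>e$4\<bar>)"
    using first \<open>0 \<le> E\<close> by (simp add: sum_4 theta_of_eta_def h_def abs_mult algebra_simps)
  finally show "norm (theta_of_eta (\<eta> + E *\<^sub>R (\<eta>\<^sub>0 - \<eta>)) - theta_of_eta \<eta>)
      \<le> E * ((\<eta>$3 * \<bar>e$1\<bar> + \<bar>\<eta>$1\<bar> * \<bar>e$3\<bar>) / (m * \<eta>$3) + \<bar>e$2\<bar> + \<bar>e$3\<bar> + \<bar>e$4\<bar>)"
    by (simp add: h_def e_def)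
qed

lemma theta_of_eta_gradient_estimate_convergence:
  fixes \<eta>h :: "real \<Rightarrow> real^4" and \<Delta> :: "real \<Rightarrow> real"
  assumes "continuous_on {0..} \<Delta>" and "0 < \<gamma>" and "0 < \<delta>" and "0 \<le> t\<^sub>c"
    and "\<And>t. t\<^sub>c \<le> t \<Longrightarrow> \<delta> \<le> \<bar>\<Delta> t\<bar>"
    and "0 < \<eta>$3" and "0 < \<eta>h 0 $ 3"
    and "\<And>t. 0 \<le> t \<Longrightarrow>
      (\<eta>h has_vector_derivative (\<gamma> * \<Delta> t) *\<^sub>R (\<Delta> t *\<^sub>R \<eta> - \<Delta> t *\<^sub>R \<eta>h t)) (at t within {0..})"
  shows "\<exists>c \<rho>. 0 < \<rho> \<and> (\<forall>t\<ge>0. norm (theta_of_eta (\<eta>h t) - theta_of_eta \<eta>) \<le> c * exp (- \<rho> * t))"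
    and "bounded (\<eta>h ` {0..})" and "bounded ((\<lambda>t. theta_of_eta (\<eta>h t)) ` {0..})"
proof -
  obtain E where E: "\<And>t. 0 \<le> t \<Longrightarrow> \<eta>h t = \<eta> + E t *\<^sub>R (\<eta>h 0 - \<eta>)"
    "\<And>t. 0 < E t" "\<And>t. 0 \<le> t \<Longrightarrow> E t \<le> 1"
    "\<And>t. 0 \<le> t \<Longrightarrow> E t \<le> exp (\<gamma> * \<delta>\<^sup>2 * t\<^sub>c) * exp (- (\<gamma> * \<delta>\<^sup>2) * t)"
    using gradient_estimator_exponential_convergence[OF assms(1,2) less_imp_le[OF assms(3)] assms(4,5,8)]
    by blast
  obtain K where K: "\<And>E. 0 \<le> E \<Longrightarrow> E \<le> 1 \<Longrightarrow>
      norm (theta_of_eta (\<eta> + E *\<^sub>R (\<eta>h 0 - \<eta>)) - theta_of_eta \<eta>) \<le> E * K"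
    using theta_of_eta_segment_error[OF assms(6,7)] by blast
  have error: "norm (theta_of_eta (\<eta>h t) - theta_of_eta \<eta>) \<le> E t * K" if "0 \<le> t" for t
    using K[of "E t"] E(1-3)[of t] that by (simp add: less_imp_le)
  have "0 \<le> K"
    using order_trans[OF norm_ge_zero K[of 1]] by simp
  have "\<forall>t\<ge>0. norm (theta_of_eta (\<eta>h t) - theta_of_eta \<eta>)
      \<le> (K * exp (\<gamma> * \<delta>\<^sup>2 * t\<^sub>c)) * exp (- (\<gamma> * \<delta>\<^sup>2) * t)"
    using order_trans[OF error mult_right_mono[OF E(4) \<open>0 \<le> K\<close>]] by (simp add: mult_ac)
  moreover have "0 < \<gamma> * \<delta>\<^sup>2"
    using assms(2,3) by simp
  ultimately show "\<exists>c \<rho>. 0 < \<rho> \<and> (\<forall>t\<ge>0. norm (theta_of_eta (\<eta>h t) - theta_of_eta \<eta>) \<le> c * exp (- \<rho> * t))"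
    by blast
  have "norm (\<eta>h t) \<le> norm \<eta> + norm (\<eta>h 0 - \<eta>)" if "0 \<le> t" for t
    using E(1)[OF that] E(2)[of t] E(3)[OF that] norm_triangle_ineq[of \<eta> "E t *\<^sub>R (\<eta>h 0 - \<eta>)"]
      mult_left_le_one_le[of "norm (\<eta>h 0 - \<eta>)" "E t"]
    by simp
  then show "bounded (\<eta>h ` {0..})"
    unfolding bounded_iff by auto
  have "norm (theta_of_eta (\<eta>h t)) \<le> norm (theta_of_eta \<eta>) + K" if "0 \<le> t" for t
    using error[OF that] E(2)[of t] E(3)[OF that] \<open>0 \<le> K\<close> mult_left_le_one_le[of K "E t"]
      norm_triangle_sub[of "theta_of_eta (\<eta>h t)" "theta_of_eta \<eta>"]
    by simp
  then show "bounded ((\<lambda>t. theta_of_eta (\<eta>h t)) ` {0..})"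
    unfolding bounded_iff by auto
qed

theorem proposition2:
  fixes C_A T T_in u :: "real \<Rightarrow> real"
    and k0 lam :: real
    and \<theta>1 \<theta>2 \<theta>3 \<theta>4 \<theta>5 :: real
    and vT vC w1 w4 y :: "real \<Rightarrow> real"
    and \<phi> :: "real \<Rightarrow> real^5"
    and \<eta> :: "real^5"
    and c_c t_c :: real
    and \<alpha> f0 \<beta>0 M \<gamma>a :: real
    and \<mu>0 :: "real^5" and \<eta>0 :: "real^4"
    and \<mu>h :: "real \<Rightarrow> real^5" and F :: "real \<Rightarrow> real^5^5"
    and \<eta>h :: "real \<Rightarrow> real^4" and z :: "real \<Rightarrow> real"
    and \<beta> \<Delta> :: "real \<Rightarrow> real" and Yc :: "real \<Rightarrow> real^5"
    and \<theta>h :: "real \<Rightarrow> real^4"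
  assumes
    \<comment> \<open>physical parameters (positive constants) and the plant\<close>
    theta_pos: "\<theta>1 > 0" "\<theta>2 > 0" "\<theta>3 > 0" "\<theta>4 > 0" "\<theta>5 > 0"
    and k0_pos: "k0 > 0"
    and states_pos: "\<forall>t\<ge>0. C_A t > 0 \<and> T t > 0"
    and plant_CA: "\<forall>t\<ge>0. (C_A has_real_derivative
          (\<theta>1 - \<theta>2 * C_A t - k0 * exp (- \<theta>5 / T t) * C_A t)) (at t within {0..})"
    and plant_T: "\<forall>t\<ge>0. (T has_real_derivative
          (\<theta>2 * (T_in t - T t) - \<theta>3 * k0 * exp (- \<theta>5 / T t) * C_A t + \<theta>4 * u t))
          (at t within {0..})"
    \<comment> \<open>filters: vT = lambda/(p+lambda)(-T), vC = lambda/(p+lambda)(-C_A),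
        w1 = lambda/(p+lambda)(T - T_in), w4 = lambda/(p+lambda)(-u);
        lambda p/(p+lambda) x = lambda (x - lambda/(p+lambda) x)\<close>
    and lam_pos: "lam > 0"
    and filt_vT: "\<forall>t\<ge>0. (vT has_real_derivative (- lam * vT t + lam * (- T t))) (at t within {0..})"
    and filt_vC: "\<forall>t\<ge>0. (vC has_real_derivative (- lam * vC t + lam * (- C_A t))) (at t within {0..})"
    and filt_w1: "\<forall>t\<ge>0. (w1 has_real_derivative (- lam * w1 t + lam * (T t - T_in t))) (at t within {0..})"
    and filt_w4: "\<forall>t\<ge>0. (w4 has_real_derivative (- lam * w4 t + lam * (- u t))) (at t within {0..})"
    and y_def: "\<forall>t. y t = lam * (- T t - vT t)"
    and phi_def: "\<forall>t. \<phi> t = vector [1, w1 t, lam * (- C_A t - vC t), w4 t, vC t]"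
    and eta_def: "\<eta> = vector [\<theta>1 * \<theta>3, \<theta>2, \<theta>3, \<theta>4, \<theta>2 * \<theta>3]"
    \<comment> \<open>linear regression (exponentially decaying filter transients neglected)\<close>
    and regression: "\<forall>t\<ge>0. y t = \<eta> \<bullet> \<phi> t"
    \<comment> \<open>interval excitation\<close>
    and IE: "c_c > 0" "t_c > 0"
      "\<exists>Q. ((\<lambda>s. \<chi> i j. \<phi> s $ i * \<phi> s $ j) has_integral Q) {0..t_c} \<and>
           (\<forall>v::real^5. c_c * (v \<bullet> v) \<le> v \<bullet> (Q *v v))"
    \<comment> \<open>tuning gains\<close>
    and gains: "\<alpha> > 0" "f0 > 0" "\<beta>0 > 0" "M \<ge> 1 / f0" "\<gamma>a > 0"
    \<comment> \<open>initial condition of the estimate of eta_{1,4} in the positive orthant\<close>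
    and eta0_pos: "\<forall>i. \<eta>0 $ i > 0"
    \<comment> \<open>auxiliary signals of the estimator\<close>
    and beta_def: "\<forall>t. \<beta> t = \<beta>0 * (1 - mat_norm (F t) / M)"
    and Delta_def: "\<forall>t. \<Delta> t = det (mat 1 - (z t * f0) *\<^sub>R F t)"
    and Y_def: "\<forall>t. Yc t = adjugate (mat 1 - (z t * f0) *\<^sub>R F t) *v
                         (\<mu>h t - (z t * f0) *\<^sub>R (F t *v \<mu>0))"
    \<comment> \<open>estimator dynamics\<close>
    and mu_ode: "\<forall>t\<ge>0. (\<mu>h has_vector_derivative
          ((\<alpha> * (y t - \<phi> t \<bullet> \<mu>h t)) *\<^sub>R (F t *v \<phi> t))) (at t within {0..})"
    and mu_init: "\<mu>h 0 = \<mu>0"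
    and F_ode: "\<forall>t\<ge>0. (F has_vector_derivative
          (- \<alpha> *\<^sub>R (F t ** (\<chi> i j. \<phi> t $ i * \<phi> t $ j) ** F t) + \<beta> t *\<^sub>R F t))
          (at t within {0..})"
    and F_init: "F 0 = (1 / f0) *\<^sub>R mat 1"
    and eta_ode: "\<forall>t\<ge>0. (\<eta>h has_vector_derivative
          ((\<gamma>a * \<Delta> t) *\<^sub>R (vector [Yc t $ 1, Yc t $ 2, Yc t $ 3, Yc t $ 4] - \<Delta> t *\<^sub>R \<eta>h t)))
          (at t within {0..})"
    and eta_init: "\<eta>h 0 = \<eta>0"
    and z_ode: "\<forall>t\<ge>0. (z has_real_derivative (- \<beta> t * z t)) (at t within {0..})"
    and z_init: "z 0 = 1"
    \<comment> \<open>parameter estimates\<close>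
    and thetah_def: "\<forall>t. \<theta>h t = vector [\<eta>h t $ 1 / \<eta>h t $ 3, \<eta>h t $ 2, \<eta>h t $ 3, \<eta>h t $ 4]"
  shows "(\<exists>c \<rho>. \<rho> > 0 \<and> (\<forall>t\<ge>0. norm (\<theta>h t - vector [\<theta>1, \<theta>2, \<theta>3, \<theta>4]) \<le> c * exp (- \<rho> * t)))
       \<and> bounded (\<mu>h ` {0..}) \<and> bounded (F ` {0..}) \<and> bounded (\<eta>h ` {0..})
       \<and> bounded (z ` {0..}) \<and> bounded (\<theta>h ` {0..})"
proof -
  have "continuous_on {0..} (\<lambda>t. vector [1, w1 t, lam * (- C_A t - vC t), w4 t, vC t] :: real^5)"
    using plant_CA filt_vC filt_w1 filt_w4
    by (intro continuous_on_vector_5 continuous_intros DERIV_continuous_on) auto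
  moreover have "\<phi> = (\<lambda>t. vector [1, w1 t, lam * (- C_A t - vC t), w4 t, vC t])"
    using phi_def by auto
  ultimately interpret forgetting_least_squares \<phi> \<alpha> f0 \<beta>0 M F z \<beta>
    using gains beta_def F_ode F_init z_ode z_init by unfold_locales (simp_all add: outer_def)
  obtain Q where Q: "((\<lambda>s. outer (\<phi> s)) has_integral Q) {0..t_c}" "\<And>v. c_c * (v \<bullet> v) \<le> v \<bullet> (Q *v v)"
    using IE(3) by (auto simp: outer_def)
  have \<Delta>_eq: "\<Delta> = (\<lambda>t. det (mat 1 - (z t * f0) *\<^sub>R F t))"
    using Delta_def by auto
  have \<Delta>_cont: "continuous_on {0..} \<Delta>"
    unfolding \<Delta>_eq by (intro continuous_on_det continuous_intros continuous_on_z continuous_on_F)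
  define \<delta> :: real where "\<delta> = 1 / (fact CARD(5) * (1 + f0 / (\<alpha> * c_c)) ^ CARD(5))"
  have \<delta>_pos: "0 < \<delta>"
    using gains IE(1) by (simp add: \<delta>_def add_pos_nonneg)
  have \<Delta>_ge: "\<delta> \<le> \<bar>\<Delta> t\<bar>" if "t_c \<le> t" for t
    using abs_det_I_minus_F_ge[OF Q IE(1) less_imp_le[OF IE(2)] that] by (simp add: \<delta>_def \<Delta>_eq)
  define \<eta>t :: "real^4" where "\<eta>t = vector [\<theta>1 * \<theta>3, \<theta>2, \<theta>3, \<theta>4]"
  have "vector [Yc t $ 1, Yc t $ 2, Yc t $ 3, Yc t $ 4] = \<Delta> t *\<^sub>R \<eta>t" if "0 \<le> t" for t
    using adjugate_regression[OF _ _ that, of y \<eta> \<mu>h] regression mu_ode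
    by (simp add: Y_def \<Delta>_eq mu_init vec_eq_iff forall_4 eta_def \<eta>t_def)
  then have \<eta>h_deriv: "(\<eta>h has_vector_derivative (\<gamma>a * \<Delta> t) *\<^sub>R (\<Delta> t *\<^sub>R \<eta>t - \<Delta> t *\<^sub>R \<eta>h t))
      (at t within {0..})" if "0 \<le> t" for t
    using eta_ode that by metis
  have "0 < \<eta>t $ 3" "0 < \<eta>h 0 $ 3"
    using theta_pos eta0_pos eta_init by (simp_all add: \<eta>t_def)
  note convergence = theta_of_eta_gradient_estimate_convergence[OF \<Delta>_cont gains(5) \<delta>_pos
      less_imp_le[OF IE(2)] \<Delta>_ge this \<eta>h_deriv]
  have "\<theta>h = (\<lambda>t. theta_of_eta (\<eta>h t))"
    using thetah_def by (auto simp: theta_of_eta_def)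
  moreover have "theta_of_eta \<eta>t = vector [\<theta>1, \<theta>2, \<theta>3, \<theta>4]"
    using theta_pos by (simp add: theta_of_eta_def \<eta>t_def)
  ultimately show ?thesis
    using convergence bounded_estimate[of y \<eta> \<mu>h] regression mu_ode bounded_F bounded_z by auto
qed

end
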